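(* The class $c_r$ of relative convex sequences is not closed under addition: for instance the sequences $(\sqrt{|n-3|})_{n\ge1}$ and $(\sqrt{|n-9|})_{n\ge1}$ both belong to $c_r$, but their sum $(\sqrt{|n-3|}+\sqrt{|n-9|})_{n\ge1}$ does not.
   Context: For a real sequence $(x_i)$, $\Delta x_i=x_{i+1}-x_i$. A real sequence $a=(a_i)_{i\ge1}$ is relative convex if there exists a strictly increasing real sequence $(t_i)_{i\ge1}$ such that $(\Delta a_i/\Delta t_i)_{i\ge1}$ is non-decreasing; $c_r$ denotes the class of all relative convex sequences. *)

theory Defs
  imports Complex_Main
begin

text \<open>Sequences are indexed by i \<ge> 1; a sequence is a function nat \<Rightarrow> real whose value
  at index 0 is ignored.\<close>

definition fdiff :: "(nat \<Rightarrow> real) \<Rightarrow> nat \<Rightarrow> real" where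
  "fdiff x i = x (Suc i) - x i"

definition relative_convex :: "(nat \<Rightarrow> real) \<Rightarrow> bool" where
  "relative_convex a \<longleftrightarrow>
     (\<exists>t :: nat \<Rightarrow> real.
        (\<forall>i\<ge>1. \<forall>j\<ge>i. i < j \<longrightarrow> t i < t j) \<and>
        (\<forall>i\<ge>1. \<forall>j\<ge>i. fdiff a i / fdiff t i \<le> fdiff a j / fdiff t j))"

definition c_r :: "(nat \<Rightarrow> real) set" where
  "c_r = {a. relative_convex a}"

end

theory Submission
  imports Defs
begin

text \<open>A sequence whose differences are nonzero and change sign exactly once, from negative to
  positive, is relative convex: measuring time by the accumulated variation
  t n = \<Sum>k<n. |\<Delta>a k| makes every quotient \<Delta>a i / \<Delta>t i equal to -1 before the sign change
  and to 1 after it. Each sequence sqrt |n - c| is of this kind. Conversely the quotients of a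
  relative convex sequence have the sign of its differences, so once such a sequence increases
  it keeps increasing; sqrt |n - 3| + sqrt |n - 9| increases from n = 5 to 6 and decreases from
  n = 6 to 7.\<close>

lemma fdiff_pos_if_strictly_increasing:
  assumes "\<forall>i\<ge>1. \<forall>j\<ge>i. i < j \<longrightarrow> t i < t j" and "i \<ge> 1"
  shows "fdiff t i > 0"
  using assms by (auto simp: fdiff_def)

lemma relative_convex_fdiff_pos_mono:
  assumes "relative_convex a" and "i \<ge> 1" and "j \<ge> i" and "fdiff a i > 0"
  shows "fdiff a j > 0"
proof -
  obtain t where t_mono: "\<forall>i\<ge>1. \<forall>j\<ge>i. i < j \<longrightarrow> t i < t j"
    and quot_mono: "fdiff a i / fdiff t i \<le> fdiff a j / fdiff t j"
    using assms(1-3) by (auto simp: relative_convex_def)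
  have "fdiff t i > 0" "fdiff t j > 0"
    using fdiff_pos_if_strictly_increasing[OF t_mono] assms(2,3) by auto
  with quot_mono \<open>fdiff a i > 0\<close> have "fdiff a j / fdiff t j > 0"
    by (smt (verit) divide_pos_pos)
  with \<open>fdiff t j > 0\<close> show ?thesis
    by (simp add: zero_less_divide_iff)
qed

lemma relative_convex_if_single_sign_change:
  assumes nonzero: "\<And>i. i \<ge> 1 \<Longrightarrow> fdiff a i \<noteq> 0"
    and sign: "\<And>i. i \<ge> 1 \<Longrightarrow> fdiff a i < 0 \<longleftrightarrow> i < c"
  shows "relative_convex a"
proof -
  define t where "t n = (\<Sum>k<n. \<bar>fdiff a k\<bar>)" for n
  have fdiff_t: "fdiff t i = \<bar>fdiff a i\<bar>" for i
    by (simp add: fdiff_def t_def)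
  have "i \<ge> 1 \<Longrightarrow> t i < t j" if "i < j" for i j
    using that
  proof (induction i j rule: less_Suc_induct)
    case (1 k)
    then show ?case
      using fdiff_t[of k] nonzero[of k] by (simp add: fdiff_def)
  qed force
  moreover have "fdiff a i / fdiff t i = (if i < c then -1 else 1)" if "i \<ge> 1" for i
    using nonzero[OF that] sign[OF that] by (auto simp: fdiff_t abs_if)
  ultimately show ?thesis
    unfolding relative_convex_def by (intro exI[of _ t]) auto
qed

lemma relative_convex_sqrt_abs_diff: "relative_convex (\<lambda>n. sqrt \<bar>real n - real c\<bar>)"
proof (rule relative_convex_if_single_sign_change[where c = c])
  fix i :: nat
  have "2 * i + 1 \<noteq> 2 * c"
    by presburger
  then have "\<bar>real (Suc i) - real c\<bar> \<noteq> \<bar>real i - real c\<bar>"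
    by (auto simp: abs_if split: if_splits)
  then show "fdiff (\<lambda>n. sqrt \<bar>real n - real c\<bar>) i \<noteq> 0"
    by (simp add: fdiff_def)
  have "\<bar>real (Suc i) - real c\<bar> < \<bar>real i - real c\<bar> \<longleftrightarrow> i < c"
    by auto
  then show "fdiff (\<lambda>n. sqrt \<bar>real n - real c\<bar>) i < 0 \<longleftrightarrow> i < c"
    by (simp add: fdiff_def)
qed

lemma sqrt2_plus_2_less_2_sqrt3: "sqrt 2 + 2 < 2 * sqrt 3"
proof -
  have "sqrt 2 < 3 / 2"
    by (rule real_less_lsqrt) (auto simp: power2_eq_square)
  then have "(sqrt 2 + 2)\<^sup>2 < (2 * sqrt 3)\<^sup>2"
    by (simp add: power2_eq_square algebra_simps)
  then show ?thesis
    by (rule power2_less_imp_less) simp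
qed

theorem corollary2p4:
  shows "(\<lambda>n::nat. sqrt \<bar>real n - 3\<bar>) \<in> c_r
       \<and> (\<lambda>n::nat. sqrt \<bar>real n - 9\<bar>) \<in> c_r
       \<and> (\<lambda>n::nat. sqrt \<bar>real n - 3\<bar> + sqrt \<bar>real n - 9\<bar>) \<notin> c_r
       \<and> \<not> (\<forall>a\<in>c_r. \<forall>b\<in>c_r. (\<lambda>n. a n + b n) \<in> c_r)"
proof -
  let ?s = "\<lambda>n::nat. sqrt \<bar>real n - 3\<bar> + sqrt \<bar>real n - 9\<bar>"
  have summands: "(\<lambda>n::nat. sqrt \<bar>real n - 3\<bar>) \<in> c_r" "(\<lambda>n::nat. sqrt \<bar>real n - 9\<bar>) \<in> c_r"
    using relative_convex_sqrt_abs_diff[of 3] relative_convex_sqrt_abs_diff[of 9]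
    by (simp_all add: c_r_def)
  have "sqrt 4 = 2"
    by (rule real_sqrt_unique) auto
  then have "?s 5 = sqrt 2 + 2" "?s 6 = 2 * sqrt 3" "?s 7 = sqrt 2 + 2"
    by simp_all
  then have "fdiff ?s 5 > 0" "\<not> fdiff ?s 6 > 0"
    using sqrt2_plus_2_less_2_sqrt3 by (simp_all add: fdiff_def)
  then have "?s \<notin> c_r"
    using relative_convex_fdiff_pos_mono[of ?s 5 6] by (auto simp: c_r_def)
  with summands show ?thesis
    by force
qed

end
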